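(* Let $a=a_0+\underline a$ and $b=b_0+\underline b$ be paravectors in $\mathrm{Cl}_{0,7}$, and write $e=e_{1234567}$. Then \begin{align*} 16[abI]_0&=a_0b_0-\underline a\cdot\underline b,\\ 16[abI]_1&=a_0\underline b+\underline ab_0-[(\underline a\wedge\underline b)W]_1,\\ 16[abI]_2&=\underline a\wedge\underline b-[(a_0\underline b+\underline ab_0)W]_2+[(\underline a\wedge\underline b)We]_2,\\ 16[abI]_3&=-(a_0b_0-\underline a\cdot\underline b)W+[(a_0\underline b+\underline ab_0)We]_3-[(\underline a\wedge\underline b)W]_3,\\ 16[abI]_4&=(a_0b_0-\underline a\cdot\underline b)We-[(a_0\underline b+\underline ab_0)W]_4+[(\underline a\wedge\underline b)We]_4,\\ 16[abI]_5&=[(a_0\underline b+\underline ab_0)We]_5-[(\underline a\wedge\underline b)W]_5-(\underline a\wedge\underline b)e,\\ 16[abI]_6&=-(a_0\underline b+\underline ab_0)e+[(\underline a\wedge\underline b)We]_6,\\ 16[abI]_7&=-(a_0b_0-\underline a\cdot\underline b)e, \end{align*} and $[abI]_k=0\iff[abI]_{7-k}=0$ for $k=0,1,\dots,7$. Moreover, if $[abI]_0=0$, then the conditions $[abI]_j=0$, $j=2,3,4,5$, are pairwise equivalent. In particular, if $[abI]_0=[abI]_1=[abI]_2=0$, then $abI=0$.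
   Context: $\mathrm{Cl}_{0,7}$ is the real associative Clifford algebra generated by $e_1,\dots,e_7$ with $e_ie_j+e_je_i=-2\delta_{ij}$; $e_{i_1\cdots i_k}=e_{i_1}\cdots e_{i_k}$; $[c]_k$ denotes the grade-$k$ part of $c\in\mathrm{Cl}_{0,7}$. Paravectors are elements $x_0+\underline x$ with $\underline x=\sum_{i=1}^7x_ie_i$. For vectors: $\underline a\cdot\underline b=\sum_ia_ib_i$ and $\underline a\wedge\underline b=\sum_{1\le i\ne j\le7}a_ib_je_ie_j$. $W=e_{123}+e_{145}+e_{176}+e_{246}+e_{257}+e_{347}+e_{365}$, and $I=I^-=\frac1{16}(1+We_{1234567})(1-e_{1234567})$. *)

theory Defs
  imports "HOL-Analysis.Analysis" "HOL-Library.Function_Algebras"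
begin

text \<open>Elements of Cl_{0,7} are represented by their coordinates with respect to the
basis blades e_A, A a subset of {1..7} (A = {} is the scalar 1).\<close>

type_synonym mv = "nat set \<Rightarrow> real"

definition blade_sign :: "nat set \<Rightarrow> nat set \<Rightarrow> real" where
  "blade_sign A B = (-1) ^ card {(a, b). a \<in> A \<and> b \<in> B \<and> b < a} * (-1) ^ card (A \<inter> B)"

definition cl_mult :: "mv \<Rightarrow> mv \<Rightarrow> mv" (infixl "\<odot>" 70) where
  "x \<odot> y = (\<lambda>C. \<Sum>A\<in>Pow {1..7}. \<Sum>B\<in>Pow {1..7}.
       if (A - B) \<union> (B - A) = C then blade_sign A B * x A * y B else 0)"

definition sc :: "real \<Rightarrow> mv \<Rightarrow> mv" where
  "sc c x = (\<lambda>A. c * x A)"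

definition scal :: "real \<Rightarrow> mv" where
  "scal c = (\<lambda>A. if A = {} then c else 0)"

definition gen :: "nat \<Rightarrow> mv" where
  "gen i = (\<lambda>A. if A = {i} then 1 else 0)"

definition eprod :: "nat list \<Rightarrow> mv" where
  "eprod is = foldr (\<lambda>i acc. gen i \<odot> acc) is (scal 1)"

definition grade :: "nat \<Rightarrow> mv \<Rightarrow> mv" where
  "grade k x = (\<lambda>A. if card A = k then x A else 0)"

definition vec :: "(nat \<Rightarrow> real) \<Rightarrow> mv" where
  "vec a = (\<Sum>i\<in>{1..7}. sc (a i) (gen i))"

definition para :: "real \<Rightarrow> (nat \<Rightarrow> real) \<Rightarrow> mv" where
  "para a0 a = scal a0 + vec a"

definition dotv :: "(nat \<Rightarrow> real) \<Rightarrow> (nat \<Rightarrow> real) \<Rightarrow> real" where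
  "dotv a b = (\<Sum>i\<in>{1..7}. a i * b i)"

definition wedgev :: "(nat \<Rightarrow> real) \<Rightarrow> (nat \<Rightarrow> real) \<Rightarrow> mv" where
  "wedgev a b = (\<Sum>i\<in>{1..7}. \<Sum>j\<in>{1..7}. if i \<noteq> j then sc (a i * b j) (gen i \<odot> gen j) else 0)"

definition Wc :: mv where
  "Wc = eprod [1,2,3] + eprod [1,4,5] + eprod [1,7,6] + eprod [2,4,6]
      + eprod [2,5,7] + eprod [3,4,7] + eprod [3,6,5]"

definition e7 :: mv where
  "e7 = eprod [1,2,3,4,5,6,7]"

definition Iminus :: mv where
  "Iminus = sc (1/16) ((scal 1 + Wc \<odot> e7) \<odot> (scal 1 - e7))"

end

theory Submission
  imports Defs
begin

text \<open>Write \<open>ab = S + V + D\<close> with \<open>S = a\<^sub>0b\<^sub>0 - a\<cdot>b\<close>, \<open>V = a\<^sub>0b + ab\<^sub>0\<close> and \<open>D = a\<and>b\<close>.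
  The eight grade formulas are identities between explicit elements of the 128-dimensional
  algebra \<open>Cl\<^sub>0\<^sub>,\<^sub>7\<close>, linear in the coefficients of \<open>S\<close>, \<open>V\<close> and \<open>D\<close>; they are verified by
  multiplying out in the basis of blades.
  For the vanishing statements the point is that \<open>I\<close> absorbs bivectors: \<open>e\<^sub>ie\<^sub>jI = e\<^sub>kI\<close>
  whenever \<open>e\<^sub>i\<^sub>j\<^sub>k\<close> is a term of \<open>W\<close> (the octonion multiplication table), so \<open>abI = (S + w)I\<close>
  for a vector \<open>w\<close>. The grade-\<open>k\<close> part of \<open>(S + w)I\<close> vanishes iff \<open>S = 0\<close> for \<open>k = 0, 7\<close>,
  iff \<open>w = 0\<close> for \<open>k = 1, 2, 5, 6\<close>, and iff both vanish for \<open>k = 3, 4\<close>.\<close>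

section \<open>Blades as bit masks\<close>

fun mask_set :: "bool list \<Rightarrow> nat set" where
  "mask_set [] = {}"
| "mask_set (b # m) = (if b then insert 1 (Suc ` mask_set m) else Suc ` mask_set m)"

lemma mem_mask_set: "i \<in> mask_set m \<longleftrightarrow> 1 \<le> i \<and> i \<le> length m \<and> m ! (i - 1)"
proof (induction m arbitrary: i)
  case (Cons b m)
  show ?case
  proof (cases i)
    case (Suc j)
    then show ?thesis using Cons.IH[of j] by (cases j) (auto simp: inj_image_mem_iff)
  qed auto
qed simp

lemma finite_mask_set [simp]: "finite (mask_set m)"
  by (induction m) auto

lemma mask_set_subset: "mask_set m \<subseteq> {1..length m}"
  by (auto simp: mem_mask_set)

lemma mem_mask_set_gr0: "i \<in> mask_set m \<Longrightarrow> 0 < i"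
  by (simp add: mem_mask_set)

lemma one_notin_Suc_mask_set: "1 \<notin> Suc ` mask_set m"
  by (auto simp: mem_mask_set)

lemma mask_set_map2_neq:
  "length m = length n \<Longrightarrow> mask_set (map2 (\<noteq>) m n) = (mask_set m - mask_set n) \<union> (mask_set n - mask_set m)"
  by (auto simp: mem_mask_set)

lemma mask_set_eq_empty_iff: "mask_set m = {} \<longleftrightarrow> m = replicate (length m) False"
proof
  assume empty: "mask_set m = {}"
  have "\<not> m ! i" if "i < length m" for i
    using empty mem_mask_set[of "Suc i" m] that by auto
  then show "m = replicate (length m) False"
    by (simp add: list_eq_iff_nth_eq)
next
  have "mask_set (replicate n False) = {}" for n
    by (induction n) auto
  then show "m = replicate (length m) False \<Longrightarrow> mask_set m = {}" by metis
qed

lemma card_mask_set: "card (mask_set m) = count_list m True"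
proof (induction m)
  case (Cons b m)
  then show ?case using one_notin_Suc_mask_set[of m] by (simp add: card_image)
qed simp

definition blade_mask :: "nat set \<Rightarrow> bool list" where
  "blade_mask A = map (\<lambda>i. i \<in> A) [1..<8]"

lemma blade_mask_eq: "blade_mask A = [1 \<in> A, 2 \<in> A, 3 \<in> A, 4 \<in> A, 5 \<in> A, 6 \<in> A, 7 \<in> A]"
  by (simp add: blade_mask_def upt_rec numeral_eq_Suc)

lemma length_blade_mask [simp]: "length (blade_mask A) = 7"
  by (simp add: blade_mask_def)

lemma mask_set_blade_mask: "mask_set (blade_mask A) = A \<inter> {1..7}"
  by (auto simp: mem_mask_set blade_mask_def)

lemma blade_mask_mask_set: "length m = 7 \<Longrightarrow> blade_mask (mask_set m) = m"
  by (rule nth_equalityI) (auto simp: blade_mask_def mem_mask_set)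

lemma card_inversions_mask_set_Cons:
  "card {(x, y). x \<in> mask_set (a # m) \<and> y \<in> mask_set (b # n) \<and> y < x}
   = (if b then count_list m True else 0) + card {(x, y). x \<in> mask_set m \<and> y \<in> mask_set n \<and> y < x}"
proof -
  let ?A = "mask_set m" and ?B = "mask_set n"
  let ?P = "\<lambda>A B. {(x, y). x \<in> A \<and> y \<in> B \<and> y < x}"
  have finite_P: "finite (?P A B)" if "finite A" "finite B" for A B :: "nat set"
    by (rule finite_subset[of _ "A \<times> B"]) (use that in auto)
  have split: "?P (mask_set (a # m)) (mask_set (b # n)) =
      (if b then (\<lambda>x. (Suc x, 1)) ` ?A else {}) \<union> map_prod Suc Suc ` ?P ?A ?B"
    using mem_mask_set_gr0[of _ m] mem_mask_set_gr0[of _ n]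
    by (auto split: if_splits simp: image_iff)
  have disjoint: "(if b then (\<lambda>x. (Suc x, 1::nat)) ` ?A else {}) \<inter> map_prod Suc Suc ` ?P ?A ?B = {}"
    using mem_mask_set_gr0[of _ n] by auto
  have "card ((\<lambda>x. (Suc x, 1::nat)) ` ?A) = card ?A"
    by (rule card_image) (auto simp: inj_on_def)
  moreover have "card (map_prod Suc Suc ` ?P ?A ?B) = card (?P ?A ?B)"
    by (rule card_image) (auto simp: inj_on_def)
  ultimately show ?thesis
    unfolding split using disjoint finite_P[of ?A ?B]
    by (simp add: card_Un_disjoint card_mask_set)
qed

lemma card_Int_mask_set_Cons:
  "card (mask_set (a # m) \<inter> mask_set (b # n)) = (if a \<and> b then 1 else 0) + card (mask_set m \<inter> mask_set n)"
proof -
  have "Suc ` mask_set m \<inter> Suc ` mask_set n = Suc ` (mask_set m \<inter> mask_set n)" by auto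
  moreover have "1 \<notin> Suc ` (mask_set m \<inter> mask_set n)" by (auto simp: mem_mask_set)
  ultimately show ?thesis
    using one_notin_Suc_mask_set[of m] one_notin_Suc_mask_set[of n]
    by (auto simp: card_image Int_insert_left Int_insert_right)
qed

fun mask_sign :: "bool list \<Rightarrow> bool list \<Rightarrow> real" where
  "mask_sign (a # m) (b # n) =
     (if b \<and> odd (count_list m True) then -1 else 1) * (if a \<and> b then -1 else 1) * mask_sign m n"
| "mask_sign _ _ = 1"

lemma blade_sign_mask_set:
  "length m = length n \<Longrightarrow> blade_sign (mask_set m) (mask_set n) = mask_sign m n"
proof (induction m n rule: mask_sign.induct)
  case (1 a m b n)
  then show ?case
    unfolding blade_sign_def card_inversions_mask_set_Cons card_Int_mask_set_Cons
    by (simp add: power_add blade_sign_def)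
qed (auto simp: blade_sign_def)

lemma blade_sign_empty_right: "blade_sign A {} = 1"
  by (simp add: blade_sign_def)

section \<open>Coefficient trees\<close>

text \<open>A perfect tree of depth \<open>k\<close> stores one coefficient per mask of length \<open>k\<close>: the mask is the
  path to the leaf, its first entry deciding between the subtrees without and with \<open>e\<^sub>1\<close>.\<close>

datatype ctree = Leaf real | Node ctree ctree

fun perfect :: "nat \<Rightarrow> ctree \<Rightarrow> bool" where
  "perfect k (Leaf x) = (k = 0)"
| "perfect k (Node T0 T1) = (k \<noteq> 0 \<and> perfect (k - 1) T0 \<and> perfect (k - 1) T1)"

fun ct_coeff :: "ctree \<Rightarrow> bool list \<Rightarrow> real" where
  "ct_coeff (Leaf x) [] = x"
| "ct_coeff (Node T0 T1) (b # m) = (if b then ct_coeff T1 m else ct_coeff T0 m)"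
| "ct_coeff _ _ = 0"

lemma perfect_Suc_iff: "perfect (Suc k) T \<longleftrightarrow> (\<exists>T0 T1. T = Node T0 T1 \<and> perfect k T0 \<and> perfect k T1)"
  by (cases T) auto

lemma perfect_eqI:
  "perfect k A \<Longrightarrow> perfect k B \<Longrightarrow> (\<And>m. length m = k \<Longrightarrow> ct_coeff A m = ct_coeff B m) \<Longrightarrow> A = B"
proof (induction k arbitrary: A B)
  case 0
  then show ?case by (cases A; cases B) (auto dest: spec[of _ "[]"])
next
  case (Suc k)
  then obtain A0 A1 B0 B1 where "A = Node A0 A1" "B = Node B0 B1"
    and "perfect k A0" "perfect k A1" "perfect k B0" "perfect k B1"
    by (auto simp: perfect_Suc_iff)
  with Suc.IH Suc.prems(3)[of "False # _"] Suc.prems(3)[of "True # _"] show ?case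
    by (metis ct_coeff.simps(2) length_Cons)
qed

fun ct_null :: "nat \<Rightarrow> ctree" where
  "ct_null 0 = Leaf 0"
| "ct_null (Suc k) = Node (ct_null k) (ct_null k)"

fun ct_unit :: "nat \<Rightarrow> ctree" where
  "ct_unit 0 = Leaf 1"
| "ct_unit (Suc k) = Node (ct_unit k) (ct_null k)"

lemma ct_null_numeral [simp]:
  "ct_null (numeral n) = Node (ct_null (pred_numeral n)) (ct_null (pred_numeral n))"
  by (simp add: numeral_eq_Suc)

lemma ct_unit_numeral [simp]:
  "ct_unit (numeral n) = Node (ct_unit (pred_numeral n)) (ct_null (pred_numeral n))"
  by (simp add: numeral_eq_Suc)

fun ct_scale :: "real \<Rightarrow> ctree \<Rightarrow> ctree" where
  "ct_scale c (Leaf x) = Leaf (c * x)"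
| "ct_scale c (Node T0 T1) = Node (ct_scale c T0) (ct_scale c T1)"

fun ct_add :: "ctree \<Rightarrow> ctree \<Rightarrow> ctree" where
  "ct_add (Leaf x) (Leaf y) = Leaf (x + y)"
| "ct_add (Node A0 A1) (Node B0 B1) = Node (ct_add A0 B0) (ct_add A1 B1)"
| "ct_add _ _ = Leaf 0"

fun ct_grade :: "nat \<Rightarrow> ctree \<Rightarrow> ctree" where
  "ct_grade k (Leaf x) = (if k = 0 then Leaf x else Leaf 0)"
| "ct_grade k (Node T0 T1) = Node (ct_grade k T0) (if k = 0 then ct_scale 0 T1 else ct_grade (k - 1) T1)"

fun ct_involute :: "ctree \<Rightarrow> ctree" where
  "ct_involute (Leaf x) = Leaf x"
| "ct_involute (Node T0 T1) = Node (ct_involute T0) (ct_scale (-1) (ct_involute T1))"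

text \<open>Left and right multiplication by the blade with mask \<open>m\<close>, splitting \<open>x = x\<^sub>0 + e\<^sub>1x\<^sub>1\<close>;
  the signs come from moving \<open>e\<^sub>1\<close> past the other generators and from \<open>e\<^sub>1\<^sup>2 = -1\<close>.\<close>

fun ct_blade_mult :: "bool list \<Rightarrow> ctree \<Rightarrow> ctree" where
  "ct_blade_mult [] T = T"
| "ct_blade_mult (a # m) (Node T0 T1) =
    (if a then Node (if odd (count_list m True) then ct_blade_mult m T1 else ct_scale (-1) (ct_blade_mult m T1))
                    (ct_blade_mult m T0)
     else Node (ct_blade_mult m T0)
               (if odd (count_list m True) then ct_scale (-1) (ct_blade_mult m T1) else ct_blade_mult m T1))"
| "ct_blade_mult (a # m) (Leaf x) = Leaf 0"

fun ct_mult_blade :: "ctree \<Rightarrow> bool list \<Rightarrow> ctree" where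
  "ct_mult_blade T [] = T"
| "ct_mult_blade (Node T0 T1) (b # m) =
    (if b then Node (ct_scale (-1) (ct_mult_blade (ct_involute T1) m)) (ct_mult_blade (ct_involute T0) m)
     else Node (ct_mult_blade T0 m) (ct_mult_blade T1 m))"
| "ct_mult_blade (Leaf x) (b # m) = Leaf 0"

lemma perfect_ct_null [simp]: "perfect k (ct_null k)"
  by (induction k) auto

lemma perfect_ct_unit [simp]: "perfect k (ct_unit k)"
  by (induction k) auto

lemma perfect_ct_scale [simp]: "perfect k (ct_scale c T) = perfect k T"
  by (induction c T arbitrary: k rule: ct_scale.induct) auto

lemma perfect_ct_add [simp]: "perfect k A \<Longrightarrow> perfect k B \<Longrightarrow> perfect k (ct_add A B)"
  by (induction A B arbitrary: k rule: ct_add.induct) auto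

lemma perfect_ct_grade [simp]: "perfect n T \<Longrightarrow> perfect n (ct_grade k T)"
  by (induction k T arbitrary: n rule: ct_grade.induct) auto

lemma perfect_ct_involute [simp]: "perfect k T \<Longrightarrow> perfect k (ct_involute T)"
  by (induction T arbitrary: k) auto

lemma perfect_ct_blade_mult [simp]: "perfect (length m) T \<Longrightarrow> perfect (length m) (ct_blade_mult m T)"
  by (induction m T rule: ct_blade_mult.induct) auto

lemma perfect_ct_mult_blade [simp]: "perfect (length m) T \<Longrightarrow> perfect (length m) (ct_mult_blade T m)"
  by (induction T m rule: ct_mult_blade.induct) auto

lemma ct_coeff_null [simp]: "ct_coeff (ct_null k) m = 0"
  by (induction k arbitrary: m; case_tac m) auto

lemma ct_coeff_unit: "length m = k \<Longrightarrow> ct_coeff (ct_unit k) m = (if m = replicate k False then 1 else 0)"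
  by (induction k arbitrary: m; case_tac m) auto

lemma ct_coeff_scale [simp]: "ct_coeff (ct_scale c T) m = c * ct_coeff T m"
  by (induction T m rule: ct_coeff.induct) auto

lemma ct_coeff_add [simp]:
  "perfect k A \<Longrightarrow> perfect k B \<Longrightarrow> ct_coeff (ct_add A B) m = ct_coeff A m + ct_coeff B m"
proof (induction A B arbitrary: k m rule: ct_add.induct)
  case (1 x y)
  then show ?case by (cases m) auto
next
  case (2 A0 A1 B0 B1)
  then show ?case by (cases m) auto
qed auto

lemma ct_coeff_grade [simp]:
  "ct_coeff (ct_grade k T) m = (if count_list m True = k then ct_coeff T m else 0)"
  by (induction T m arbitrary: k rule: ct_coeff.induct) auto

lemma ct_coeff_involute [simp]:
  "ct_coeff (ct_involute T) m = (if odd (count_list m True) then - ct_coeff T m else ct_coeff T m)"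
  by (induction T m rule: ct_coeff.induct) auto

lemma ct_coeff_blade_mult:
  "perfect (length m) T \<Longrightarrow> length n = length m \<Longrightarrow>
   ct_coeff (ct_blade_mult m T) n = mask_sign m (map2 (\<noteq>) m n) * ct_coeff T (map2 (\<noteq>) m n)"
proof (induction m arbitrary: T n)
  case (Cons a m)
  obtain T0 T1 where "T = Node T0 T1" "perfect (length m) T0" "perfect (length m) T1"
    using Cons.prems(1) by (cases T) auto
  moreover obtain c n' where "n = c # n'" "length n' = length m"
    using Cons.prems(2) by (cases n) auto
  ultimately show ?case using Cons.IH by (cases a; cases c) auto
qed simp

lemma ct_coeff_mult_blade:
  "perfect (length m) T \<Longrightarrow> length n = length m \<Longrightarrow>
   ct_coeff (ct_mult_blade T m) n = mask_sign (map2 (\<noteq>) n m) m * ct_coeff T (map2 (\<noteq>) n m)"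
proof (induction m arbitrary: T n)
  case (Cons b m)
  obtain T0 T1 where "T = Node T0 T1" "perfect (length m) T0" "perfect (length m) T1"
    using Cons.prems(1) by (cases T) auto
  moreover obtain c n' where "n = c # n'" "length n' = length m"
    using Cons.prems(2) by (cases n) auto
  ultimately show ?case using Cons.IH by (cases b; cases c) auto
qed simp

definition in_cl7 :: "mv \<Rightarrow> bool" where
  "in_cl7 x \<longleftrightarrow> (\<forall>C. x C \<noteq> 0 \<longrightarrow> C \<subseteq> {1..7})"

lemma mv_eqI_mask_set:
  assumes "in_cl7 x" "in_cl7 y" "\<And>m. length m = 7 \<Longrightarrow> x (mask_set m) = y (mask_set m)"
  shows "x = y"
proof
  fix C
  show "x C = y C"
  proof (cases "C \<subseteq> {1..7}")
    case True
    then have "C = mask_set (blade_mask C)" by (simp add: mask_set_blade_mask Int_absorb2)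
    then show ?thesis using assms(3)[of "blade_mask C"] by simp
  next
    case False
    then show ?thesis using assms(1,2) unfolding in_cl7_def by metis
  qed
qed

lemma in_cl7_cl_mult [simp]: "in_cl7 (x \<odot> y)"
  unfolding in_cl7_def
proof (intro allI impI)
  fix C
  assume nonzero: "(x \<odot> y) C \<noteq> 0"
  show "C \<subseteq> {1..7}"
  proof (rule ccontr)
    assume "\<not> C \<subseteq> {1..7}"
    then have "(A - B) \<union> (B - A) \<noteq> C" if "A \<in> Pow {1..7}" "B \<in> Pow {1..7}" for A B
      using that by blast
    then have "(x \<odot> y) C = 0" unfolding cl_mult_def by (simp add: sum.neutral)
    with nonzero show False by simp
  qed
qed

lemma in_cl7_zero [simp]: "in_cl7 0"
  by (simp add: in_cl7_def)

lemma in_cl7_add [simp]: "in_cl7 x \<Longrightarrow> in_cl7 y \<Longrightarrow> in_cl7 (x + y)"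
  unfolding in_cl7_def by (metis add.right_neutral add_0 plus_fun_apply)

lemma in_cl7_sc [simp]: "in_cl7 x \<Longrightarrow> in_cl7 (sc c x)"
  by (simp add: in_cl7_def sc_def)

lemma in_cl7_grade [simp]: "in_cl7 x \<Longrightarrow> in_cl7 (grade k x)"
  by (simp add: in_cl7_def grade_def)

definition blade :: "nat set \<Rightarrow> mv" where
  "blade A = (\<lambda>C. if C = A then 1 else 0)"

lemma in_cl7_blade: "A \<subseteq> {1..7} \<Longrightarrow> in_cl7 (blade A)"
  by (simp add: in_cl7_def blade_def)

lemma blade_mult_apply:
  assumes "A \<subseteq> {1..7}" "C \<subseteq> {1..7}"
  shows "(blade A \<odot> x) C = blade_sign A ((A - C) \<union> (C - A)) * x ((A - C) \<union> (C - A))"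
proof -
  let ?B = "(A - C) \<union> (C - A)"
  have B: "?B \<subseteq> {1..7}" using assms by blast
  have "(A' - B) \<union> (B - A') = C \<longleftrightarrow> B = (A' - C) \<union> (C - A')" for A' B :: "nat set"
    by blast
  then have "(blade A \<odot> x) C = (\<Sum>A'\<in>Pow {1..7}. \<Sum>B\<in>Pow {1..7}.
       if B = ?B then (if A' = A then blade_sign A ?B * x ?B else 0) else 0)"
    unfolding cl_mult_def by (intro sum.cong refl) (auto simp: blade_def)
  also have "\<dots> = blade_sign A ?B * x ?B"
    using assms B by (simp add: sum.delta)
  finally show ?thesis .
qed

lemma mult_blade_apply:
  assumes "B \<subseteq> {1..7}" "C \<subseteq> {1..7}"
  shows "(x \<odot> blade B) C = blade_sign ((C - B) \<union> (B - C)) B * x ((C - B) \<union> (B - C))"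
proof -
  let ?A = "(C - B) \<union> (B - C)"
  have A: "?A \<subseteq> {1..7}" using assms by blast
  have "(A - B') \<union> (B' - A) = C \<longleftrightarrow> A = (C - B') \<union> (B' - C)" for A B' :: "nat set"
    by blast
  then have "(x \<odot> blade B) C = (\<Sum>A\<in>Pow {1..7}. \<Sum>B'\<in>Pow {1..7}.
       if B' = B then (if A = ?A then blade_sign ?A B * x ?A else 0) else 0)"
    unfolding cl_mult_def by (intro sum.cong refl) (auto simp: blade_def)
  also have "\<dots> = blade_sign ?A B * x ?A"
    using assms A by (simp add: sum.delta)
  finally show ?thesis .
qed

lemma cl_mult_blade_empty: "in_cl7 x \<Longrightarrow> x \<odot> blade {} = x"
proof (rule mv_eqI_mask_set)
  fix m :: "bool list"
  assume "length m = 7"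
  then show "(x \<odot> blade {}) (mask_set m) = x (mask_set m)"
    using mask_set_subset[of m] by (simp add: mult_blade_apply blade_sign_empty_right)
qed simp_all

lemma cl_mult_add_left: "(x + y) \<odot> z = x \<odot> z + y \<odot> z"
  unfolding cl_mult_def
  by (rule ext) (simp add: sum.distrib[symmetric] algebra_simps if_distrib cong: if_cong)

lemma cl_mult_add_right: "z \<odot> (x + y) = z \<odot> x + z \<odot> y"
  unfolding cl_mult_def
  by (rule ext) (simp add: sum.distrib[symmetric] algebra_simps if_distrib cong: if_cong)

lemma cl_mult_sc_left: "sc c x \<odot> y = sc c (x \<odot> y)"
  unfolding cl_mult_def sc_def
  by (rule ext) (simp add: sum_distrib_left algebra_simps if_distrib cong: if_cong)

lemma cl_mult_sc_right: "x \<odot> sc c y = sc c (x \<odot> y)"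
  unfolding cl_mult_def sc_def
  by (rule ext) (simp add: sum_distrib_left algebra_simps if_distrib cong: if_cong)

lemma cl_mult_zero_left [simp]: "0 \<odot> x = 0"
  using cl_mult_add_left[of 0 0 x] by simp

lemma cl_mult_zero_right [simp]: "x \<odot> 0 = 0"
  using cl_mult_add_right[of x 0 0] by simp

lemma sc_zero [simp]: "sc c 0 = 0"
  by (simp add: sc_def fun_eq_iff)

lemma sc_zero_left [simp]: "sc 0 x = 0"
  by (simp add: sc_def fun_eq_iff)

lemma grade_add: "grade k (x + y) = grade k x + grade k y"
  by (simp add: grade_def fun_eq_iff)

lemma grade_sc: "grade k (sc c x) = sc c (grade k x)"
  by (simp add: grade_def sc_def fun_eq_iff)

lemma grade_blade: "grade k (blade A) = (if card A = k then blade A else 0)"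
  by (auto simp: grade_def blade_def fun_eq_iff)

definition mv_of_ct :: "ctree \<Rightarrow> mv" where
  "mv_of_ct T = (\<lambda>C. if C \<subseteq> {1..7} then ct_coeff T (blade_mask C) else 0)"

lemma in_cl7_mv_of_ct [simp]: "in_cl7 (mv_of_ct T)"
  by (simp add: in_cl7_def mv_of_ct_def)

lemma mv_of_ct_mask_set: "length m = 7 \<Longrightarrow> mv_of_ct T (mask_set m) = ct_coeff T m"
  using mask_set_subset[of m] by (simp add: mv_of_ct_def blade_mask_mask_set)

lemma mv_of_ct_eq_iff: "perfect 7 A \<Longrightarrow> perfect 7 B \<Longrightarrow> mv_of_ct A = mv_of_ct B \<longleftrightarrow> A = B"
  by (metis mv_of_ct_mask_set perfect_eqI)

lemma mv_of_ct_ct_null: "mv_of_ct (ct_null 7) = 0"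
  by (simp add: mv_of_ct_def fun_eq_iff del: ct_null_numeral)

lemma mv_of_ct_eq_0_iff: "perfect 7 T \<Longrightarrow> mv_of_ct T = 0 \<longleftrightarrow> T = ct_null 7"
  by (metis mv_of_ct_ct_null mv_of_ct_eq_iff perfect_ct_null)

lemma mv_of_ct_ct_unit: "mv_of_ct (ct_unit 7) = blade {}"
proof (rule mv_eqI_mask_set)
  show "in_cl7 (blade {})" by (simp add: in_cl7_blade)
qed (simp_all add: mv_of_ct_mask_set ct_coeff_unit blade_def mask_set_eq_empty_iff del: ct_unit_numeral)

lemma mv_of_ct_add:
  "perfect 7 A \<Longrightarrow> perfect 7 B \<Longrightarrow> mv_of_ct A + mv_of_ct B = mv_of_ct (ct_add A B)"
  by (rule mv_eqI_mask_set) (simp_all add: mv_of_ct_mask_set)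

lemma sc_mv_of_ct: "sc c (mv_of_ct T) = mv_of_ct (ct_scale c T)"
  by (rule mv_eqI_mask_set) (simp_all add: mv_of_ct_mask_set, simp add: sc_def mv_of_ct_mask_set)

lemma uminus_mv_of_ct: "- mv_of_ct T = mv_of_ct (ct_scale (-1) T)"
  using sc_mv_of_ct[of "-1" T] by (simp add: sc_def fun_eq_iff)

lemma mv_of_ct_diff:
  "perfect 7 A \<Longrightarrow> perfect 7 B \<Longrightarrow> mv_of_ct A - mv_of_ct B = mv_of_ct (ct_add A (ct_scale (-1) B))"
  by (simp add: mv_of_ct_add[symmetric] uminus_mv_of_ct[symmetric])

lemma grade_mv_of_ct: "grade k (mv_of_ct T) = mv_of_ct (ct_grade k T)"
  by (rule mv_eqI_mask_set)
    (simp_all add: mv_of_ct_mask_set, simp add: grade_def card_mask_set mv_of_ct_mask_set)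

lemma blade_mult_mv_of_ct:
  assumes "perfect 7 T" "A \<subseteq> {1..7}"
  shows "blade A \<odot> mv_of_ct T = mv_of_ct (ct_blade_mult (blade_mask A) T)"
proof (rule mv_eqI_mask_set)
  fix n :: "bool list"
  assume n: "length n = 7"
  have A: "A = mask_set (blade_mask A)" using assms(2) by (simp add: mask_set_blade_mask Int_absorb2)
  have "(A - mask_set n) \<union> (mask_set n - A) = mask_set (map2 (\<noteq>) (blade_mask A) n)"
    using n A mask_set_map2_neq[of "blade_mask A" n] by simp
  then show "(blade A \<odot> mv_of_ct T) (mask_set n) = mv_of_ct (ct_blade_mult (blade_mask A) T) (mask_set n)"
    using assms n mask_set_subset[of n]
    by (simp add: blade_mult_apply mv_of_ct_mask_set ct_coeff_blade_mult blade_sign_mask_set[symmetric],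
        metis A)
qed simp_all

lemma mv_of_ct_mult_blade:
  assumes "perfect 7 T" "B \<subseteq> {1..7}"
  shows "mv_of_ct T \<odot> blade B = mv_of_ct (ct_mult_blade T (blade_mask B))"
proof (rule mv_eqI_mask_set)
  fix n :: "bool list"
  assume n: "length n = 7"
  have B: "B = mask_set (blade_mask B)" using assms(2) by (simp add: mask_set_blade_mask Int_absorb2)
  have "(mask_set n - B) \<union> (B - mask_set n) = mask_set (map2 (\<noteq>) n (blade_mask B))"
    using n B mask_set_map2_neq[of n "blade_mask B"] by simp
  then show "(mv_of_ct T \<odot> blade B) (mask_set n) = mv_of_ct (ct_mult_blade T (blade_mask B)) (mask_set n)"
    using assms n mask_set_subset[of n]
    by (simp add: mult_blade_apply mv_of_ct_mask_set ct_coeff_mult_blade blade_sign_mask_set[symmetric],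
        metis B)
qed simp_all

text \<open>These pointwise rules make the simplifier eta-expand sums, differences and zeros of
  multivectors, which would block the rewrite rules below.\<close>

declare plus_fun_apply [simp del] zero_fun_apply [simp del] uminus_apply [simp del] minus_apply [simp del]

lemma sc_add: "sc c (x + y) = sc c x + sc c y"
  by (simp add: sc_def fun_eq_iff algebra_simps plus_fun_apply)

lemma sc_sc: "sc c (sc d x) = sc (c * d) x"
  by (simp add: sc_def fun_eq_iff)

lemma uminus_sc: "- sc c x = sc (- c) x"
  by (simp add: sc_def fun_eq_iff uminus_apply)

definition blade_sum :: "(nat set \<times> real) list \<Rightarrow> mv" where
  "blade_sum xs = (\<Sum>(A, c)\<leftarrow>xs. sc c (blade A))"

lemma blade_sum_Nil: "blade_sum [] = 0"
  by (simp add: blade_sum_def)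

lemma blade_sum_Cons: "blade_sum ((A, c) # xs) = sc c (blade A) + blade_sum xs"
  by (simp add: blade_sum_def)

lemma blade_sum_append: "blade_sum xs + blade_sum ys = blade_sum (xs @ ys)"
  by (simp add: blade_sum_def)

lemma sc_blade_sum: "sc c (blade_sum xs) = blade_sum (map (\<lambda>(A, d). (A, c * d)) xs)"
  by (induction xs) (auto simp: blade_sum_Nil blade_sum_Cons sc_add sc_sc)

lemma uminus_blade_sum: "- blade_sum xs = blade_sum (map (\<lambda>(A, d). (A, - d)) xs)"
  by (induction xs) (auto simp: blade_sum_Nil blade_sum_Cons uminus_sc)

lemma blade_sum_diff: "blade_sum xs - blade_sum ys = blade_sum (xs @ map (\<lambda>(A, d). (A, - d)) ys)"
  by (simp add: blade_sum_append[symmetric] uminus_blade_sum[symmetric])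

lemma grade_blade_sum: "grade k (blade_sum xs) = blade_sum (filter (\<lambda>(A, c). card A = k) xs)"
proof (induction xs)
  case Nil
  then show ?case by (simp add: blade_sum_Nil grade_def fun_eq_iff zero_fun_apply)
next
  case (Cons p xs)
  then show ?case by (cases p) (simp add: blade_sum_Cons grade_add grade_sc grade_blade)
qed

lemma in_cl7_blade_sum: "\<forall>(A, c) \<in> set xs. A \<subseteq> {1..7} \<Longrightarrow> in_cl7 (blade_sum xs)"
  by (induction xs) (auto simp: blade_sum_Nil blade_sum_Cons in_cl7_blade)

fun ct_blade_sum_mult :: "(nat set \<times> real) list \<Rightarrow> ctree \<Rightarrow> ctree" where
  "ct_blade_sum_mult [] T = ct_scale 0 T"
| "ct_blade_sum_mult ((A, c) # xs) T =
     ct_add (ct_scale c (ct_blade_mult (blade_mask A) T)) (ct_blade_sum_mult xs T)"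

fun ct_mult_blade_sum :: "ctree \<Rightarrow> (nat set \<times> real) list \<Rightarrow> ctree" where
  "ct_mult_blade_sum T [] = ct_scale 0 T"
| "ct_mult_blade_sum T ((B, c) # ys) =
     ct_add (ct_scale c (ct_mult_blade T (blade_mask B))) (ct_mult_blade_sum T ys)"

definition ct_of_blade_sum :: "(nat set \<times> real) list \<Rightarrow> ctree" where
  "ct_of_blade_sum xs = ct_blade_sum_mult xs (ct_unit 7)"

lemma perfect_ct_blade_mult_blade_mask [simp]:
  "perfect 7 T \<Longrightarrow> perfect 7 (ct_blade_mult (blade_mask A) T)"
  by (metis length_blade_mask perfect_ct_blade_mult)

lemma perfect_ct_mult_blade_blade_mask [simp]:
  "perfect 7 T \<Longrightarrow> perfect 7 (ct_mult_blade T (blade_mask A))"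
  by (metis length_blade_mask perfect_ct_mult_blade)

lemma perfect_ct_blade_sum_mult [simp]: "perfect 7 T \<Longrightarrow> perfect 7 (ct_blade_sum_mult xs T)"
  by (induction xs T rule: ct_blade_sum_mult.induct) simp_all

lemma perfect_ct_mult_blade_sum [simp]: "perfect 7 T \<Longrightarrow> perfect 7 (ct_mult_blade_sum T ys)"
  by (induction T ys rule: ct_mult_blade_sum.induct) simp_all

lemma perfect_ct_of_blade_sum [simp]: "perfect 7 (ct_of_blade_sum xs)"
  by (simp add: ct_of_blade_sum_def del: ct_unit_numeral)

lemma blade_sum_mult_mv_of_ct:
  assumes "\<forall>(A, c) \<in> set xs. A \<subseteq> {1..7}" "perfect 7 T"
  shows "blade_sum xs \<odot> mv_of_ct T = mv_of_ct (ct_blade_sum_mult xs T)"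
  using assms(1)
proof (induction xs)
  case Nil
  show ?case by (simp add: blade_sum_Nil sc_mv_of_ct[symmetric])
next
  case (Cons p xs)
  then show ?case using assms(2)
    by (cases p) (simp add: blade_sum_Cons cl_mult_add_left cl_mult_sc_left blade_mult_mv_of_ct
        sc_mv_of_ct mv_of_ct_add)
qed

lemma mv_of_ct_mult_blade_sum:
  assumes "\<forall>(B, c) \<in> set ys. B \<subseteq> {1..7}" "perfect 7 T"
  shows "mv_of_ct T \<odot> blade_sum ys = mv_of_ct (ct_mult_blade_sum T ys)"
  using assms(1)
proof (induction ys)
  case Nil
  show ?case by (simp add: blade_sum_Nil sc_mv_of_ct[symmetric])
next
  case (Cons p ys)
  then show ?case using assms(2)
    by (cases p) (simp add: blade_sum_Cons cl_mult_add_right cl_mult_sc_right mv_of_ct_mult_blade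
        sc_mv_of_ct mv_of_ct_add)
qed

lemma blade_sum_eq_mv_of_ct:
  "\<forall>(A, c) \<in> set xs. A \<subseteq> {1..7} \<Longrightarrow> blade_sum xs = mv_of_ct (ct_of_blade_sum xs)"
  using blade_sum_mult_mv_of_ct[of xs "ct_unit 7"]
  by (simp add: ct_of_blade_sum_def mv_of_ct_ct_unit cl_mult_blade_empty in_cl7_blade_sum
      del: ct_unit_numeral)

lemma blade_sum_mult_blade_sum:
  "\<forall>(A, c) \<in> set xs. A \<subseteq> {1..7} \<Longrightarrow> \<forall>(B, d) \<in> set ys. B \<subseteq> {1..7} \<Longrightarrow>
   blade_sum xs \<odot> blade_sum ys = mv_of_ct (ct_blade_sum_mult xs (ct_of_blade_sum ys))"
  by (simp add: blade_sum_eq_mv_of_ct[of ys] blade_sum_mult_mv_of_ct)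

lemma blade_sum_add_mv_of_ct:
  "\<forall>(A, c) \<in> set xs. A \<subseteq> {1..7} \<Longrightarrow> perfect 7 T \<Longrightarrow>
   blade_sum xs + mv_of_ct T = mv_of_ct (ct_add (ct_of_blade_sum xs) T)"
  by (simp add: blade_sum_eq_mv_of_ct mv_of_ct_add)

lemma mv_of_ct_add_blade_sum:
  "\<forall>(A, c) \<in> set xs. A \<subseteq> {1..7} \<Longrightarrow> perfect 7 T \<Longrightarrow>
   mv_of_ct T + blade_sum xs = mv_of_ct (ct_add T (ct_of_blade_sum xs))"
  by (simp add: blade_sum_eq_mv_of_ct mv_of_ct_add)

lemma blade_sum_diff_mv_of_ct:
  "\<forall>(A, c) \<in> set xs. A \<subseteq> {1..7} \<Longrightarrow> perfect 7 T \<Longrightarrow>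
   blade_sum xs - mv_of_ct T = mv_of_ct (ct_add (ct_of_blade_sum xs) (ct_scale (-1) T))"
  by (simp add: blade_sum_eq_mv_of_ct mv_of_ct_diff)

lemma mv_of_ct_diff_blade_sum:
  "\<forall>(A, c) \<in> set xs. A \<subseteq> {1..7} \<Longrightarrow> perfect 7 T \<Longrightarrow>
   mv_of_ct T - blade_sum xs = mv_of_ct (ct_add T (ct_scale (-1) (ct_of_blade_sum xs)))"
  by (simp add: blade_sum_eq_mv_of_ct mv_of_ct_diff)

lemma blade_sum_eq_mv_of_ct_iff:
  "\<forall>(A, c) \<in> set xs. A \<subseteq> {1..7} \<Longrightarrow> perfect 7 T \<Longrightarrow>
   blade_sum xs = mv_of_ct T \<longleftrightarrow> ct_of_blade_sum xs = T"
  by (simp add: blade_sum_eq_mv_of_ct mv_of_ct_eq_iff)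

lemma mv_of_ct_eq_blade_sum_iff:
  "\<forall>(A, c) \<in> set xs. A \<subseteq> {1..7} \<Longrightarrow> perfect 7 T \<Longrightarrow>
   mv_of_ct T = blade_sum xs \<longleftrightarrow> T = ct_of_blade_sum xs"
  by (simp add: blade_sum_eq_mv_of_ct mv_of_ct_eq_iff)

lemma blade_sum_eq_blade_sum_iff:
  "\<forall>(A, c) \<in> set xs. A \<subseteq> {1..7} \<Longrightarrow> \<forall>(B, d) \<in> set ys. B \<subseteq> {1..7} \<Longrightarrow>
   blade_sum xs = blade_sum ys \<longleftrightarrow> ct_of_blade_sum xs = ct_of_blade_sum ys"
  by (simp add: blade_sum_eq_mv_of_ct mv_of_ct_eq_iff)

text \<open>Sums, scalings and grades of blade sums stay sparse; products and mixed expressions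
  become coefficient trees, and equations between trees become equations between leaves.\<close>

lemmas cl7_eval =
  blade_sum_append sc_blade_sum uminus_blade_sum blade_sum_diff grade_blade_sum
  blade_sum_mult_blade_sum blade_sum_mult_mv_of_ct mv_of_ct_mult_blade_sum
  mv_of_ct_add sc_mv_of_ct uminus_mv_of_ct mv_of_ct_diff grade_mv_of_ct
  blade_sum_add_mv_of_ct mv_of_ct_add_blade_sum blade_sum_diff_mv_of_ct mv_of_ct_diff_blade_sum
  mv_of_ct_eq_iff mv_of_ct_eq_0_iff blade_sum_eq_mv_of_ct_iff mv_of_ct_eq_blade_sum_iff
  blade_sum_eq_blade_sum_iff ct_of_blade_sum_def blade_mask_eq

lemma sum_atLeastAtMost_1_7: "(\<Sum>i\<in>{1..7::nat}. f i) = f 1 + f 2 + f 3 + f 4 + f 5 + f 6 + f 7"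
proof -
  have "{1..7::nat} = {1, 2, 3, 4, 5, 6, 7}" by auto
  then show ?thesis by (simp add: add.assoc)
qed

lemma ball_atLeastAtMost_1_7: "(\<forall>i\<in>{1..7::nat}. P i) \<longleftrightarrow> P 1 \<and> P 2 \<and> P 3 \<and> P 4 \<and> P 5 \<and> P 6 \<and> P 7"
proof -
  have "{1..7::nat} = {1, 2, 3, 4, 5, 6, 7}" by auto
  then show ?thesis by simp
qed

lemma all_atMost_7: "(\<forall>k\<le>7::nat. P k) \<longleftrightarrow> P 0 \<and> P 1 \<and> P 2 \<and> P 3 \<and> P 4 \<and> P 5 \<and> P 6 \<and> P 7"
proof -
  have "{..7::nat} = {0, 1, 2, 3, 4, 5, 6, 7}" by auto
  moreover have "(\<forall>k\<le>7::nat. P k) \<longleftrightarrow> (\<forall>k\<in>{..7}. P k)" by auto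
  ultimately show ?thesis by simp
qed

lemma all_atMost_7_iff_7_minus:
  "(\<forall>k\<le>7::nat. P k \<longleftrightarrow> P (7 - k)) \<longleftrightarrow> (P 0 \<longleftrightarrow> P 7) \<and> (P 1 \<longleftrightarrow> P 6) \<and> (P 2 \<longleftrightarrow> P 5) \<and> (P 3 \<longleftrightarrow> P 4)"
  unfolding all_atMost_7 by auto

lemma ball_atLeastAtMost_2_5: "(\<forall>j\<in>{2..5::nat}. P j) \<longleftrightarrow> P 2 \<and> P 3 \<and> P 4 \<and> P 5"
proof -
  have "{2..5::nat} = {2, 3, 4, 5}" by auto
  then show ?thesis by simp
qed

definition bivec :: "(nat \<Rightarrow> nat \<Rightarrow> real) \<Rightarrow> mv" where
  "bivec q = (\<Sum>i\<in>{1..7}. \<Sum>j\<in>{1..7}. if i < j then sc (q i j) (gen i \<odot> gen j) else 0)"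

lemma scal_as_blade_sum: "scal c = blade_sum [({}, c)]"
  by (simp add: blade_sum_Cons blade_sum_Nil scal_def sc_def blade_def fun_eq_iff plus_fun_apply zero_fun_apply)

lemma gen_as_blade_sum: "gen i = blade_sum [({i}, 1)]"
  by (simp add: blade_sum_Cons blade_sum_Nil gen_def sc_def blade_def fun_eq_iff plus_fun_apply zero_fun_apply)

lemma vec_as_blade_sum:
  "vec v = blade_sum [({1}, v 1), ({2}, v 2), ({3}, v 3), ({4}, v 4), ({5}, v 5), ({6}, v 6), ({7}, v 7)]"
  unfolding vec_def sum_atLeastAtMost_1_7 by (simp add: gen_as_blade_sum cl7_eval)

lemma bivec_as_blade_sum:
  "bivec q = blade_sum [({1,2}, q 1 2), ({1,3}, q 1 3), ({1,4}, q 1 4), ({1,5}, q 1 5),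
    ({1,6}, q 1 6), ({1,7}, q 1 7), ({2,3}, q 2 3), ({2,4}, q 2 4), ({2,5}, q 2 5), ({2,6}, q 2 6),
    ({2,7}, q 2 7), ({3,4}, q 3 4), ({3,5}, q 3 5), ({3,6}, q 3 6), ({3,7}, q 3 7), ({4,5}, q 4 5),
    ({4,6}, q 4 6), ({4,7}, q 4 7), ({5,6}, q 5 6), ({5,7}, q 5 7), ({6,7}, q 6 7)]"
  unfolding bivec_def sum_atLeastAtMost_1_7 by (simp add: gen_as_blade_sum cl7_eval)

lemma e7_as_blade_sum: "e7 = blade_sum [({1,2,3,4,5,6,7}, 1)]"
  unfolding e7_def eprod_def by (simp add: gen_as_blade_sum scal_as_blade_sum cl7_eval)

lemma Wc_as_blade_sum:
  "Wc = blade_sum [({1,2,3}, 1), ({1,4,5}, 1), ({1,6,7}, -1), ({2,4,6}, 1),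
    ({2,5,7}, 1), ({3,4,7}, 1), ({3,5,6}, -1)]"
  unfolding Wc_def eprod_def by (simp add: gen_as_blade_sum scal_as_blade_sum cl7_eval)

lemma Iminus_as_blade_sum:
  "Iminus = blade_sum [({}, 1/16), ({1,2,3}, -1/16), ({1,4,5}, -1/16), ({1,6,7}, 1/16),
    ({2,4,6}, -1/16), ({2,5,7}, -1/16), ({3,4,7}, -1/16), ({3,5,6}, 1/16),
    ({1,2,4,7}, -1/16), ({1,2,5,6}, 1/16), ({1,3,4,6}, 1/16), ({1,3,5,7}, 1/16),
    ({2,3,4,5}, -1/16), ({2,3,6,7}, 1/16), ({4,5,6,7}, 1/16), ({1,2,3,4,5,6,7}, -1/16)]"
  unfolding Iminus_def Wc_as_blade_sum e7_as_blade_sum scal_as_blade_sum by (simp add: cl7_eval)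

lemmas cl7_as_blade_sums =
  scal_as_blade_sum vec_as_blade_sum bivec_as_blade_sum Wc_as_blade_sum e7_as_blade_sum Iminus_as_blade_sum

lemma vec_add: "vec v + vec w = vec (\<lambda>i. v i + w i)"
  by (simp add: vec_as_blade_sum cl7_eval)

lemma sc_vec_add_sc_vec: "sc c (vec v) + sc d (vec w) = vec (\<lambda>i. c * v i + d * w i)"
  by (simp add: vec_as_blade_sum cl7_eval)

lemma wedgev_eq_bivec: "wedgev a b = bivec (\<lambda>i j. a i * b j - a j * b i)"
  unfolding wedgev_def sum_atLeastAtMost_1_7 by (simp add: gen_as_blade_sum bivec_as_blade_sum cl7_eval)

lemma para_mult_para:
  "para a0 a \<odot> para b0 b = scal (a0 * b0 - dotv a b) + (sc a0 (vec b) + sc b0 (vec a)) + wedgev a b"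
  unfolding para_def dotv_def sum_atLeastAtMost_1_7 wedgev_eq_bivec
  by (simp add: scal_as_blade_sum vec_as_blade_sum bivec_as_blade_sum cl7_eval)

section \<open>Multiplication by \<open>I\<close>\<close>

text \<open>\<open>e\<^sub>ie\<^sub>jI = e\<^sub>kI\<close> whenever \<open>e\<^sub>i\<^sub>j\<^sub>k\<close> is one of the seven terms of \<open>W\<close>; this is the
  octonion multiplication table along the lines of the Fano plane.\<close>

definition fano_vec :: "(nat \<Rightarrow> nat \<Rightarrow> real) \<Rightarrow> nat \<Rightarrow> real" where
  "fano_vec q i =
     (if i = 1 then q 2 3 + q 4 5 - q 6 7
      else if i = 2 then - q 1 3 + q 4 6 + q 5 7
      else if i = 3 then q 1 2 + q 4 7 - q 5 6
      else if i = 4 then - q 1 5 - q 2 6 - q 3 7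
      else if i = 5 then q 1 4 - q 2 7 + q 3 6
      else if i = 6 then q 1 7 + q 2 4 - q 3 5
      else if i = 7 then - q 1 6 + q 2 5 + q 3 4
      else 0)"

lemma bivec_mult_Iminus: "bivec q \<odot> Iminus = vec (fano_vec q) \<odot> Iminus"
  by (simp add: cl7_as_blade_sums cl7_eval fano_vec_def) (simp add: field_simps)

lemma scal_vec_bivec_mult_Iminus:
  "(scal s + vec v + bivec q) \<odot> Iminus = (scal s + vec (\<lambda>i. v i + fano_vec q i)) \<odot> Iminus"
  by (simp add: vec_add[symmetric] cl_mult_add_left bivec_mult_Iminus add.assoc)

lemma grades_mult_Iminus:
  fixes s :: real and v :: "nat \<Rightarrow> real" and q :: "nat \<Rightarrow> nat \<Rightarrow> real"
  defines "X \<equiv> (scal s + vec v + bivec q) \<odot> Iminus" and "V \<equiv> vec v" and "D \<equiv> bivec q"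
  shows "sc 16 (grade 0 X) = scal s"
    and "sc 16 (grade 1 X) = V - grade 1 (D \<odot> Wc)"
    and "sc 16 (grade 2 X) = D - grade 2 (V \<odot> Wc) + grade 2 (D \<odot> Wc \<odot> e7)"
    and "sc 16 (grade 3 X) = - sc s Wc + grade 3 (V \<odot> Wc \<odot> e7) - grade 3 (D \<odot> Wc)"
    and "sc 16 (grade 4 X) = sc s (Wc \<odot> e7) - grade 4 (V \<odot> Wc) + grade 4 (D \<odot> Wc \<odot> e7)"
    and "sc 16 (grade 5 X) = grade 5 (V \<odot> Wc \<odot> e7) - grade 5 (D \<odot> Wc) - D \<odot> e7"
    and "sc 16 (grade 6 X) = - (V \<odot> e7) + grade 6 (D \<odot> Wc \<odot> e7)"
    and "sc 16 (grade 7 X) = - sc s e7"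
  unfolding X_def V_def D_def scal_vec_bivec_mult_Iminus
  by (simp_all add: cl7_as_blade_sums cl7_eval fano_vec_def field_simps)

lemma grade_mult_Iminus_eq_0_iff:
  fixes s :: real and w :: "nat \<Rightarrow> real"
  defines "X \<equiv> (scal s + vec w) \<odot> Iminus" and "W \<equiv> \<forall>i\<in>{1..7}. w i = 0"
  shows "grade 0 X = 0 \<longleftrightarrow> s = 0" and "grade 7 X = 0 \<longleftrightarrow> s = 0"
    and "grade 1 X = 0 \<longleftrightarrow> W" and "grade 2 X = 0 \<longleftrightarrow> W"
    and "grade 5 X = 0 \<longleftrightarrow> W" and "grade 6 X = 0 \<longleftrightarrow> W"
    and "grade 3 X = 0 \<longleftrightarrow> s = 0 \<and> W" and "grade 4 X = 0 \<longleftrightarrow> s = 0 \<and> W"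
    and "X = 0 \<longleftrightarrow> s = 0 \<and> W"
  unfolding X_def W_def ball_atLeastAtMost_1_7
  by (simp_all add: cl7_as_blade_sums cl7_eval) blast+

theorem lemma5p1:
  fixes a0 b0 :: real and a b :: "nat \<Rightarrow> real"
  shows "let X = para a0 a \<odot> para b0 b \<odot> Iminus;
             S = a0 * b0 - dotv a b;
             V = sc a0 (vec b) + sc b0 (vec a);
             D = wedgev a b
         in sc 16 (grade 0 X) = scal S
          \<and> sc 16 (grade 1 X) = V - grade 1 (D \<odot> Wc)
          \<and> sc 16 (grade 2 X) = D - grade 2 (V \<odot> Wc) + grade 2 (D \<odot> Wc \<odot> e7)
          \<and> sc 16 (grade 3 X) = - sc S Wc + grade 3 (V \<odot> Wc \<odot> e7) - grade 3 (D \<odot> Wc)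
          \<and> sc 16 (grade 4 X) = sc S (Wc \<odot> e7) - grade 4 (V \<odot> Wc) + grade 4 (D \<odot> Wc \<odot> e7)
          \<and> sc 16 (grade 5 X) = grade 5 (V \<odot> Wc \<odot> e7) - grade 5 (D \<odot> Wc) - D \<odot> e7
          \<and> sc 16 (grade 6 X) = - (V \<odot> e7) + grade 6 (D \<odot> Wc \<odot> e7)
          \<and> sc 16 (grade 7 X) = - sc S e7
          \<and> (\<forall>k\<le>7. grade k X = 0 \<longleftrightarrow> grade (7 - k) X = 0)
          \<and> (grade 0 X = 0 \<longrightarrow>
               (\<forall>j\<in>{2..5}. \<forall>l\<in>{2..5}. grade j X = 0 \<longleftrightarrow> grade l X = 0))
          \<and> (grade 0 X = 0 \<and> grade 1 X = 0 \<and> grade 2 X = 0 \<longrightarrow> X = 0)"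
proof -
  define S where "S = a0 * b0 - dotv a b"
  define v where "v i = a0 * b i + b0 * a i" for i
  define q where "q i j = a i * b j - a j * b i" for i j
  define w where "w = (\<lambda>i. v i + fano_vec q i)"
  define Y where "Y = (scal S + vec v + bivec q) \<odot> Iminus"
  have V: "sc a0 (vec b) + sc b0 (vec a) = vec v"
    unfolding v_def by (rule sc_vec_add_sc_vec)
  have D: "wedgev a b = bivec q"
    unfolding q_def by (rule wedgev_eq_bivec)
  have X: "para a0 a \<odot> para b0 b \<odot> Iminus = Y"
    by (simp add: Y_def para_mult_para S_def V D)
  have Y_vec: "Y = (scal S + vec w) \<odot> Iminus"
    unfolding Y_def w_def by (rule scal_vec_bivec_mult_Iminus)
  note grades = grades_mult_Iminus[of S v q, folded Y_def]
  note vanishing = grade_mult_Iminus_eq_0_iff[of S w, folded Y_vec]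
  show ?thesis
    unfolding Let_def S_def[symmetric] V D X ball_atLeastAtMost_2_5
      all_atMost_7_iff_7_minus[of "\<lambda>k. grade k Y = 0"]
    by (simp add: grades vanishing del: One_nat_def) \<comment> \<open>keeps \<open>grade 1\<close> in the form of the facts\<close>
qed

end
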